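(* Let $f$ be a real-valued symmetric ternary tensor in $(\mathbb{C}^3)^{\otimes 3}$, and suppose there exist $\alpha,\beta,\gamma\in\mathbb{C}^3$ with $f=\alpha^{\otimes 3}+\beta^{\otimes 3}+\gamma^{\otimes 3}$ and $\langle\alpha,\beta\rangle=\langle\beta,\gamma\rangle=\langle\gamma,\alpha\rangle=0$. Then there exist real vectors $\alpha',\beta',\gamma'\in\mathbb{R}^3$ with $f=\alpha'^{\otimes 3}+\beta'^{\otimes 3}+\gamma'^{\otimes 3}$ and $\langle\alpha',\beta'\rangle=\langle\beta',\gamma'\rangle=\langle\gamma',\alpha'\rangle=0$. Consequently, there is a $3\times3$ real orthogonal matrix $T$ and $a,b,c\in\mathbb{R}$ such that $T^{\otimes 3} f = a\,e_1^{\otimes 3}+b\,e_2^{\otimes 3}+c\,e_3^{\otimes 3}$.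
   Context: A ternary signature on domain $\{1,2,3\}$ (colors R, G, B) is a function $\{1,2,3\}^3\to\mathbb{C}$, identified with a tensor in $(\mathbb{C}^3)^{\otimes 3}$; it is symmetric if invariant under permutation of its arguments. For $u,v\in\mathbb{C}^n$, $\langle u,v\rangle=\sum_j u_jv_j$ (bilinear, no conjugation). $e_1,e_2,e_3$ are the standard basis vectors. For a matrix $T$, $Tf$ denotes $T^{\otimes 3}f$. *)

theory Defs
  imports "HOL-Analysis.Analysis"
begin

type_synonym tsig = "3 \<Rightarrow> 3 \<Rightarrow> 3 \<Rightarrow> complex"

definition symmetric_sig :: "tsig \<Rightarrow> bool" where
  "symmetric_sig f \<longleftrightarrow> (\<forall>x y z. f x y z = f y x z \<and> f x y z = f x z y)"

definition real_valued_sig :: "tsig \<Rightarrow> bool" where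
  "real_valued_sig f \<longleftrightarrow> (\<forall>x y z. f x y z \<in> \<real>)"

definition cube :: "complex ^ 3 \<Rightarrow> tsig" where
  "cube a = (\<lambda>x y z. a $ x * a $ y * a $ z)"

text \<open>Bilinear form <u,v> = sum_j u_j v_j (no conjugation).\<close>
definition bil :: "complex ^ 3 \<Rightarrow> complex ^ 3 \<Rightarrow> complex" where
  "bil u v = (\<Sum>j\<in>UNIV. u $ j * v $ j)"

definition tmul :: "complex ^ 3 ^ 3 \<Rightarrow> tsig \<Rightarrow> tsig" where
  "tmul T f = (\<lambda>x y z. \<Sum>u\<in>UNIV. \<Sum>v\<in>UNIV. \<Sum>w\<in>UNIV.
      T $ x $ u * T $ y $ v * T $ z $ w * f u v w)"

definition e :: "3 \<Rightarrow> complex ^ 3" where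
  "e i = (\<chi> j. if j = i then 1 else 0)"

end

theory Submission
  imports Defs
begin

text \<open>If \<alpha> is orthogonal to the other summands, contracting f with \<alpha> shows that \<alpha> is an eigenvector
  of every real symmetric slice f(-,-,z), with eigenvalue \<langle>\<alpha>,\<alpha>\<rangle>\<alpha>_z; hence \<langle>\<alpha>,\<alpha>\<rangle>\<alpha> is real, and for
  non-isotropic \<alpha> a rescaling by a cube root of unity turns \<alpha> into a real vector with the same cube.
  What remains is a real combination S of cubes of isotropic, pairwise orthogonal vectors; its self-pairing
  \<Sum> S^2 is a combination of cubes of bilinear products, all zero, so S = 0. Finally an orthogonal matrix
  mapping the orthogonal real vectors onto coordinate axes diagonalises f.\<close>

definition of_real_vec :: "real ^ 'n \<Rightarrow> complex ^ 'n" where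
  "of_real_vec v = (\<chi> i. complex_of_real (v $ i))"

lemma bil_commute: "bil u v = bil v u"
  by (simp add: bil_def mult.commute)

lemma bil_scalar_mult: "bil (s *s u) (t *s v) = s * t * bil u v"
  by (simp add: bil_def sum_distrib_left mult_ac)

lemma of_real_inner_eq_bil: "complex_of_real (u \<bullet> v) = bil (of_real_vec u) (of_real_vec v)"
  by (simp add: inner_vec_def bil_def of_real_vec_def)

lemma real_symmetric_eigenvalue_real:
  fixes M :: "complex ^ 'n ^ 'n" and v :: "complex ^ 'n"
  assumes real: "\<And>i j. M $ i $ j \<in> \<real>" and sym: "\<And>i j. M $ i $ j = M $ j $ i"
    and eigen: "M *v v = c *s v" and "v \<noteq> 0"
  shows "c \<in> \<real>"
proof -
  define n where "n = (\<Sum>i\<in>UNIV. (cmod (v $ i))\<^sup>2)"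
  define N where "N = (\<Sum>i\<in>UNIV. \<Sum>j\<in>UNIV. cnj (v $ i) * M $ i $ j * v $ j)"
  obtain k where "v $ k \<noteq> 0" using \<open>v \<noteq> 0\<close> by (auto simp: vec_eq_iff)
  then have "n \<noteq> 0"
    unfolding n_def by (subst sum_nonneg_eq_0_iff) auto
  have row: "(\<Sum>j\<in>UNIV. M $ i $ j * v $ j) = c * v $ i" for i
    using eigen by (simp add: vec_eq_iff matrix_vector_mult_def)
  have "N = c * of_real n"
  proof -
    have "N = (\<Sum>i\<in>UNIV. cnj (v $ i) * (c * v $ i))"
      by (simp add: N_def sum_distrib_left mult.assoc flip: row)
    also have "\<dots> = c * of_real n"
      by (simp add: n_def sum_distrib_left mult_ac flip: complex_norm_square)
    finally show ?thesis .
  qed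
  moreover have "cnj N = N"
  proof -
    have "cnj N = (\<Sum>i\<in>UNIV. \<Sum>j\<in>UNIV. v $ i * M $ i $ j * cnj (v $ j))"
      using real by (simp add: N_def Reals_cnj_iff)
    also have "\<dots> = N"
      unfolding N_def by (subst sum.swap) (simp add: sym mult_ac)
    finally show ?thesis .
  qed
  ultimately have "c = N / of_real n" "N \<in> \<real>"
    using \<open>n \<noteq> 0\<close> by (simp_all add: Reals_cnj_iff)
  then show ?thesis by simp
qed

lemma cube_slice_mult: "(\<chi> x y. cube \<beta> x y z) *v \<alpha> = (\<beta> $ z * bil \<beta> \<alpha>) *s \<beta>"
  by (simp add: vec_eq_iff matrix_vector_mult_def cube_def bil_def sum_distrib_left mult_ac)

lemma orthogonal_summand_eigenvalue_real:
  fixes f :: tsig and \<alpha> \<beta> \<gamma> :: "complex ^ 3"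
  assumes "real_valued_sig f"
    and f: "f = (\<lambda>x y z. cube \<alpha> x y z + cube \<beta> x y z + cube \<gamma> x y z)"
    and "bil \<alpha> \<beta> = 0" and "bil \<alpha> \<gamma> = 0"
  shows "bil \<alpha> \<alpha> * \<alpha> $ i \<in> \<real>"
proof (cases "\<alpha> = 0")
  case False
  let ?M = "\<chi> x y. f x y i"
  have "?M *v \<alpha> = (\<alpha> $ i * bil \<alpha> \<alpha>) *s \<alpha>"
    using cube_slice_mult[of \<alpha> i \<alpha>] cube_slice_mult[of \<beta> i \<alpha>] cube_slice_mult[of \<gamma> i \<alpha>] assms(3,4)
    by (simp add: f matrix_vector_mult_def vec_eq_iff sum.distrib algebra_simps bil_commute)
  moreover have "?M $ x $ y \<in> \<real>" "?M $ x $ y = ?M $ y $ x" for x y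
    using assms(1) by (simp_all add: real_valued_sig_def f cube_def mult_ac)
  ultimately show ?thesis
    using real_symmetric_eigenvalue_real False by (metis mult.commute)
qed simp

lemma cube_scalar_mult: "cube (t *s \<alpha>) = (\<lambda>x y z. t ^ 3 * cube \<alpha> x y z)"
  by (simp add: cube_def fun_eq_iff power3_eq_cube mult_ac)

lemma cube_eq_cube_of_real_vec:
  fixes \<alpha> :: "complex ^ 3"
  assumes nonisotropic: "bil \<alpha> \<alpha> \<noteq> 0" and real: "\<And>i. bil \<alpha> \<alpha> * \<alpha> $ i \<in> \<real>"
  shows "\<exists>v t. of_real_vec v = t *s \<alpha> \<and> cube (of_real_vec v) = cube \<alpha>"
proof -
  define a where "a = bil \<alpha> \<alpha>"
  define r where "r = (\<chi> i. Re (a * \<alpha> $ i))"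
  have r: "of_real_vec r = a *s \<alpha>"
    unfolding of_real_vec_def r_def vec_eq_iff vec_lambda_beta vector_smult_component
    using real of_real_Re a_def by metis
  \<comment> \<open>Since r \<bullet> r = a^3, dividing r by the real cube root of r \<bullet> r rescales \<alpha> by a cube root of unity.\<close>
  have "complex_of_real (r \<bullet> r) = a ^ 3"
    by (simp add: of_real_inner_eq_bil r bil_scalar_mult a_def power3_eq_cube)
  moreover define c where "c = root 3 (r \<bullet> r)"
  ultimately have c: "complex_of_real c ^ 3 = a ^ 3" "c \<noteq> 0"
    using nonisotropic by (auto simp: a_def c_def real_root_pow_pos2 simp flip: of_real_power)
  have "of_real_vec ((1 / c) *\<^sub>R r) = (a / of_real c) *s \<alpha>"
    using r by (simp add: of_real_vec_def vec_eq_iff divide_inverse mult_ac)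
  moreover have "(a / of_real c) ^ 3 = 1"
    using c nonisotropic by (simp add: a_def power_divide)
  then have "cube ((a / of_real c) *s \<alpha>) = cube \<alpha>"
    by (simp add: cube_scalar_mult)
  ultimately show ?thesis by metis
qed

lemma cube_eq_isotropic_part_plus_real_cube:
  fixes f :: tsig and \<alpha> \<beta> \<gamma> :: "complex ^ 3"
  assumes "real_valued_sig f"
    and "f = (\<lambda>x y z. cube \<alpha> x y z + cube \<beta> x y z + cube \<gamma> x y z)"
    and "bil \<alpha> \<beta> = 0" and "bil \<alpha> \<gamma> = 0"
  shows "\<exists>v t. of_real_vec v = t *s \<alpha> \<and>
           cube \<alpha> = (\<lambda>x y z. of_bool (bil \<alpha> \<alpha> = 0) * cube \<alpha> x y z + cube (of_real_vec v) x y z)"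
proof (cases "bil \<alpha> \<alpha> = 0")
  case True
  show ?thesis
    by (intro exI[of _ 0]) (simp add: True of_real_vec_def cube_def vec_eq_iff)
next
  case False
  with cube_eq_cube_of_real_vec orthogonal_summand_eigenvalue_real[OF assms] show ?thesis
    by fastforce
qed

definition sig_inner :: "tsig \<Rightarrow> tsig \<Rightarrow> complex" where
  "sig_inner S R = (\<Sum>x\<in>UNIV. \<Sum>y\<in>UNIV. \<Sum>z\<in>UNIV. S x y z * R x y z)"

lemma sig_inner_cube: "sig_inner (cube a) (cube b) = bil a b ^ 3"
proof -
  have "sig_inner (cube a) (cube b) =
      (\<Sum>x\<in>UNIV. \<Sum>y\<in>UNIV. \<Sum>z\<in>UNIV. (a $ x * b $ x) * ((a $ y * b $ y) * (a $ z * b $ z)))"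
    unfolding sig_inner_def cube_def by (simp add: mult_ac)
  also have "\<dots> = bil a b * (bil a b * bil a b)"
    unfolding bil_def by (simp add: sum_distrib_left sum_distrib_right mult_ac)
  finally show ?thesis by (simp add: power3_eq_cube)
qed

lemma sig_inner_linear_left:
  "sig_inner (\<lambda>x y z. p * S1 x y z + q * S2 x y z + r * S3 x y z) R =
     p * sig_inner S1 R + q * sig_inner S2 R + r * sig_inner S3 R"
  unfolding sig_inner_def by (simp add: distrib_right sum.distrib sum_distrib_left mult.assoc)

lemma sig_inner_linear_right:
  "sig_inner R (\<lambda>x y z. p * S1 x y z + q * S2 x y z + r * S3 x y z) =
     p * sig_inner R S1 + q * sig_inner R S2 + r * sig_inner R S3"
  unfolding sig_inner_def by (simp add: distrib_left sum.distrib sum_distrib_left mult_ac)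

lemma real_sig_eq_0_if_sig_inner_self_eq_0:
  assumes "real_valued_sig S" and "sig_inner S S = 0"
  shows "S x y z = 0"
proof -
  define T where "T x y z = Re (S x y z)" for x y z
  have S: "S x y z = of_real (T x y z)" for x y z
    using assms(1) by (simp add: T_def real_valued_sig_def of_real_Re)
  have "complex_of_real (\<Sum>x\<in>UNIV. \<Sum>y\<in>UNIV. \<Sum>z\<in>UNIV. (T x y z)\<^sup>2) = 0"
    using assms(2) by (simp add: sig_inner_def S power2_eq_square)
  then have "(T x y z)\<^sup>2 = 0"
    by (simp only: of_real_eq_0_iff) (simp add: sum_nonneg_eq_0_iff sum_nonneg)
  then show ?thesis by (simp add: S)
qed

lemma real_isotropic_cube_combination_eq_0:
  fixes S :: tsig
  assumes real: "real_valued_sig S"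
    and S: "S = (\<lambda>x y z. p * cube \<alpha> x y z + q * cube \<beta> x y z + r * cube \<gamma> x y z)"
    and "p * bil \<alpha> \<alpha> = 0" "q * bil \<beta> \<beta> = 0" "r * bil \<gamma> \<gamma> = 0"
    and "bil \<alpha> \<beta> = 0" "bil \<beta> \<gamma> = 0" "bil \<gamma> \<alpha> = 0"
  shows "S x y z = 0"
proof (rule real_sig_eq_0_if_sig_inner_self_eq_0[OF real])
  have "sig_inner S S = p * (p * bil \<alpha> \<alpha> ^ 3 + q * bil \<alpha> \<beta> ^ 3 + r * bil \<alpha> \<gamma> ^ 3)
      + q * (p * bil \<beta> \<alpha> ^ 3 + q * bil \<beta> \<beta> ^ 3 + r * bil \<beta> \<gamma> ^ 3)
      + r * (p * bil \<gamma> \<alpha> ^ 3 + q * bil \<gamma> \<beta> ^ 3 + r * bil \<gamma> \<gamma> ^ 3)"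
    by (simp only: S sig_inner_linear_left sig_inner_linear_right sig_inner_cube)
  moreover have "bil \<beta> \<alpha> = 0" "bil \<gamma> \<beta> = 0" "bil \<alpha> \<gamma> = 0"
    using assms(6-) bil_commute by metis+
  ultimately show "sig_inner S S = 0"
    using assms(3-) by (auto simp: power3_eq_cube)
qed

lemma real_orthogonal_cube_decomposition:
  fixes f :: tsig and \<alpha> \<beta> \<gamma> :: "complex ^ 3"
  assumes real: "real_valued_sig f"
    and f: "f = (\<lambda>x y z. cube \<alpha> x y z + cube \<beta> x y z + cube \<gamma> x y z)"
    and ab: "bil \<alpha> \<beta> = 0" and bg: "bil \<beta> \<gamma> = 0" and ga: "bil \<gamma> \<alpha> = 0"
  obtains a b c :: "real ^ 3"
  where "f = (\<lambda>x y z. cube (of_real_vec a) x y z + cube (of_real_vec b) x y z + cube (of_real_vec c) x y z)"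
    and "a \<bullet> b = 0" and "b \<bullet> c = 0" and "c \<bullet> a = 0"
proof -
  have ba: "bil \<beta> \<alpha> = 0" and gb: "bil \<gamma> \<beta> = 0" and ag: "bil \<alpha> \<gamma> = 0"
    using ab bg ga bil_commute by metis+
  have f\<beta>: "f = (\<lambda>x y z. cube \<beta> x y z + cube \<gamma> x y z + cube \<alpha> x y z)"
    and f\<gamma>: "f = (\<lambda>x y z. cube \<gamma> x y z + cube \<alpha> x y z + cube \<beta> x y z)"
    using f by (simp_all add: add_ac)
  define p q r :: complex where "p = of_bool (bil \<alpha> \<alpha> = 0)" and "q = of_bool (bil \<beta> \<beta> = 0)"
    and "r = of_bool (bil \<gamma> \<gamma> = 0)"
  obtain a ta where a: "of_real_vec a = ta *s \<alpha>"
    and \<alpha>: "cube \<alpha> = (\<lambda>x y z. p * cube \<alpha> x y z + cube (of_real_vec a) x y z)"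
    using cube_eq_isotropic_part_plus_real_cube[OF real f ab ag] unfolding p_def by blast
  obtain b tb where b: "of_real_vec b = tb *s \<beta>"
    and \<beta>: "cube \<beta> = (\<lambda>x y z. q * cube \<beta> x y z + cube (of_real_vec b) x y z)"
    using cube_eq_isotropic_part_plus_real_cube[OF real f\<beta> bg ba] unfolding q_def by blast
  obtain c tc where c: "of_real_vec c = tc *s \<gamma>"
    and \<gamma>: "cube \<gamma> = (\<lambda>x y z. r * cube \<gamma> x y z + cube (of_real_vec c) x y z)"
    using cube_eq_isotropic_part_plus_real_cube[OF real f\<gamma> ga gb] unfolding r_def by blast
  define g where "g x y z = cube (of_real_vec a) x y z + cube (of_real_vec b) x y z
    + cube (of_real_vec c) x y z" for x y z
  define S where "S x y z = p * cube \<alpha> x y z + q * cube \<beta> x y z + r * cube \<gamma> x y z" for x y z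
  have fS: "f x y z = S x y z + g x y z" for x y z
    unfolding f S_def g_def by (subst \<alpha>, subst \<beta>, subst \<gamma>) (simp add: algebra_simps)
  have "g x y z \<in> \<real>" for x y z
    by (simp add: g_def cube_def of_real_vec_def)
  then have "real_valued_sig S"
    using real fS unfolding real_valued_sig_def by (metis Reals_diff add_diff_cancel_right')
  then have "S x y z = 0" for x y z
    by (rule real_isotropic_cube_combination_eq_0[where p = p and q = q and r = r, OF _ _ _ _ _ ab bg ga])
      (auto simp: S_def p_def q_def r_def fun_eq_iff)
  with fS have "f = g" by (simp add: fun_eq_iff)
  moreover have "a \<bullet> b = 0" "b \<bullet> c = 0" "c \<bullet> a = 0"
    using of_real_inner_eq_bil[of a b] of_real_inner_eq_bil[of b c] of_real_inner_eq_bil[of c a]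
    by (simp_all add: a b c bil_scalar_mult ab bg ga)
  ultimately show ?thesis
    using that unfolding g_def by blast
qed

lemma orthonormal_extension:
  fixes P :: "'a::euclidean_space set"
  assumes orth: "pairwise orthogonal P" and unit: "\<And>x. x \<in> P \<Longrightarrow> norm x = 1"
  obtains B where "P \<subseteq> B" "pairwise orthogonal B" "\<And>x. x \<in> B \<Longrightarrow> norm x = 1"
    "card B = DIM('a)"
proof -
  obtain U where U: "U \<inter> insert 0 P = {}" "pairwise orthogonal (P \<union> U)"
    "span (P \<union> U) = span (P \<union> UNIV)"
    using orthogonal_extension_strong[OF orth] by blast
  define B where "B = (\<lambda>x. x /\<^sub>R norm x) ` (P \<union> U)"
  have "0 \<notin> P \<union> U"
    using U(1) unit by force
  then have unitB: "norm x = 1" if "x \<in> B" for x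
    using that \<open>0 \<notin> P \<union> U\<close> by (auto simp: B_def norm_sgn simp flip: sgn_div_norm)
  have "P \<subseteq> B"
    using unit by (force simp: B_def)
  moreover have orthB: "pairwise orthogonal B"
    unfolding B_def by (rule pairwise_imageI) (use U(2) in \<open>auto simp: pairwise_def orthogonal_def\<close>)
  moreover have "card B = DIM('a)"
  proof -
    have "x \<in> span B" if "x \<in> P \<union> U" for x
    proof -
      have "x \<noteq> 0"
        using \<open>0 \<notin> P \<union> U\<close> that by blast
      then have "x = norm x *\<^sub>R (x /\<^sub>R norm x)"
        by simp
      then show ?thesis
        using that by (metis B_def imageI span_base span_mul)
    qed
    then have "span B = UNIV"
      using U(3) by (metis span_UNIV span_minimal subspace_span subsetI sup_top_right top.extremum_uniqueI)
    moreover have "independent B"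
      using orthB unitB by (metis norm_zero pairwise_orthogonal_independent zero_neq_one)
    ultimately show ?thesis
      using indep_card_eq_dim_span by fastforce
  qed
  ultimately show ?thesis
    using that unitB by blast
qed

lemma orthogonal_matrix_of_orthonormal_basis:
  fixes B :: "(real ^ 'n) set"
  assumes orth: "pairwise orthogonal B" and unit: "\<And>x. x \<in> B \<Longrightarrow> norm x = 1"
    and card: "card B = CARD('n)"
  obtains T :: "real ^ 'n ^ 'n" where "orthogonal_matrix T" "\<And>b. b \<in> B \<Longrightarrow> \<exists>k. T *v b = axis k 1"
proof -
  have "finite B"
    using card by (simp add: card_ge_0_finite)
  then obtain f where f: "bij_betw f (UNIV :: 'n set) B"
    using finite_same_card_bij[of "UNIV :: 'n set" B] card by auto
  have unit_f: "norm (f i) = 1" for i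
    using bij_betwE[OF f] unit by blast
  have orth_f: "orthogonal (f i) (f j)" if "i \<noteq> j" for i j
    using orth f that by (auto simp: pairwise_def bij_betw_def inj_on_def)
  define T where "T = (\<chi> i j. f i $ j)"
  have "orthogonal_matrix T"
    using unit_f orth_f by (simp add: orthogonal_matrix_orthonormal_rows row_def T_def)
  moreover have "T *v f k = axis k 1" for k
  proof -
    have "f i \<bullet> f k = (if i = k then 1 else 0)" for i
      using orth_f[of i k] unit_f[of k] by (auto simp: orthogonal_def norm_eq_1)
    then show ?thesis
      by (simp add: vec_eq_iff T_def matrix_vector_mult_def axis_def inner_vec_def)
  qed
  ultimately show ?thesis
    using that f by (metis bij_betw_imp_surj_on imageE)
qed

lemma orthogonal_matrix_aligning_to_axes:
  fixes A :: "(real ^ 'n) set"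
  assumes "pairwise orthogonal A"
  obtains T :: "real ^ 'n ^ 'n"
  where "orthogonal_matrix T" "\<And>v. v \<in> A \<Longrightarrow> \<exists>k. T *v v = norm v *\<^sub>R axis k 1"
proof -
  define P where "P = (\<lambda>v. v /\<^sub>R norm v) ` (A - {0})"
  have "pairwise orthogonal P"
    using assms by (auto simp: P_def pairwise_def orthogonal_def)
  moreover have "\<And>x. x \<in> P \<Longrightarrow> norm x = 1"
    by (auto simp: P_def norm_sgn simp flip: sgn_div_norm split: if_splits)
  ultimately obtain B where "P \<subseteq> B" "pairwise orthogonal B" "\<And>x. x \<in> B \<Longrightarrow> norm x = 1"
    "card B = CARD('n)"
    by (metis orthonormal_extension DIM_cart DIM_real mult_1_right)
  then obtain T where T: "orthogonal_matrix T" "\<And>b. b \<in> B \<Longrightarrow> \<exists>k. T *v b = axis k 1"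
    using orthogonal_matrix_of_orthonormal_basis by blast
  have "\<exists>k. T *v v = norm v *\<^sub>R axis k 1" if v: "v \<in> A" for v
  proof (cases "v = 0")
    case False
    then obtain k where "T *v (v /\<^sub>R norm v) = axis k 1"
      using T(2) \<open>P \<subseteq> B\<close> v by (auto simp: P_def)
    then have "T *v v = norm v *\<^sub>R axis k 1"
      using False by (metis (no_types) matrix_vector_mult_scaleR norm_eq_zero scaleR_scaleR
          divide_inverse_commute divide_self_if scaleR_one)
    then show ?thesis ..
  qed simp
  with T(1) that show ?thesis by blast
qed

lemma tmul_cube: "tmul M (cube a) = cube (M *v a)"
  unfolding tmul_def cube_def matrix_vector_mult_def
  by (simp add: fun_eq_iff sum_3 algebra_simps)

lemma map_matrix_of_real_mult_of_real_vec:
  "map_matrix complex_of_real T *v of_real_vec v = of_real_vec (T *v v)"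
  by (simp add: vec_eq_iff matrix_vector_mult_def of_real_vec_def)

lemma tmul_add3:
  "tmul M (\<lambda>x y z. A x y z + B x y z + C x y z) =
     (\<lambda>x y z. tmul M A x y z + tmul M B x y z + tmul M C x y z)"
  unfolding tmul_def by (simp add: fun_eq_iff distrib_left sum.distrib)

lemma cube_of_real_vec_axis:
  "cube (of_real_vec (s *\<^sub>R axis k 1)) x y z = of_real (s ^ 3) * cube (e k) x y z"
  by (simp add: cube_def of_real_vec_def e_def axis_def power3_eq_cube)

lemma scaled_cube_e_expand:
  "of_real s * cube (e k) x y z =
     of_real (of_bool (k = 1) * s) * cube (e 1) x y z + of_real (of_bool (k = 2) * s) * cube (e 2) x y z
     + of_real (of_bool (k = 3) * s) * cube (e 3) x y z"
  using exhaust_3[of k] by auto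

lemma diagonalize_orthogonal_real_cubes:
  fixes a b c :: "real ^ 3"
  assumes "a \<bullet> b = 0" and "b \<bullet> c = 0" and "c \<bullet> a = 0"
  obtains T :: "real ^ 3 ^ 3" and s\<^sub>1 s\<^sub>2 s\<^sub>3 :: real
  where "orthogonal_matrix T"
    and "tmul (map_matrix complex_of_real T)
           (\<lambda>x y z. cube (of_real_vec a) x y z + cube (of_real_vec b) x y z + cube (of_real_vec c) x y z) =
         (\<lambda>x y z. of_real s\<^sub>1 * cube (e 1) x y z + of_real s\<^sub>2 * cube (e 2) x y z
                   + of_real s\<^sub>3 * cube (e 3) x y z)"
proof -
  have "pairwise orthogonal {a, b, c}"
    using assms by (auto simp: pairwise_def orthogonal_def inner_commute)
  then obtain T :: "real ^ 3 ^ 3" where T: "orthogonal_matrix T"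
    and "\<And>v. v \<in> {a, b, c} \<Longrightarrow> \<exists>k. T *v v = norm v *\<^sub>R axis k 1"
    using orthogonal_matrix_aligning_to_axes by blast
  then obtain k\<^sub>a k\<^sub>b k\<^sub>c where k: "T *v a = norm a *\<^sub>R axis k\<^sub>a 1" "T *v b = norm b *\<^sub>R axis k\<^sub>b 1"
    "T *v c = norm c *\<^sub>R axis k\<^sub>c 1"
    by (meson insertI1 insertCI)
  define s where "s j = of_bool (k\<^sub>a = j) * norm a ^ 3 + of_bool (k\<^sub>b = j) * norm b ^ 3
    + of_bool (k\<^sub>c = j) * norm c ^ 3" for j
  have "tmul (map_matrix complex_of_real T)
           (\<lambda>x y z. cube (of_real_vec a) x y z + cube (of_real_vec b) x y z + cube (of_real_vec c) x y z) =
         (\<lambda>x y z. of_real (s 1) * cube (e 1) x y z + of_real (s 2) * cube (e 2) x y z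
                   + of_real (s 3) * cube (e 3) x y z)"
    unfolding tmul_add3 tmul_cube map_matrix_of_real_mult_of_real_vec k cube_of_real_vec_axis
    by (subst (1 2 3) scaled_cube_e_expand) (simp add: s_def fun_eq_iff algebra_simps)
  with T that show ?thesis by blast
qed

theorem mainTheorem2:
  fixes f :: tsig and \<alpha> \<beta> \<gamma> :: "complex ^ 3"
  assumes "symmetric_sig f" and "real_valued_sig f"
    and "f = (\<lambda>x y z. cube \<alpha> x y z + cube \<beta> x y z + cube \<gamma> x y z)"
    and "bil \<alpha> \<beta> = 0" and "bil \<beta> \<gamma> = 0" and "bil \<gamma> \<alpha> = 0"
  shows "(\<exists>\<alpha>' \<beta>' \<gamma>' :: real ^ 3.
            f = (\<lambda>x y z. cube (\<chi> i. complex_of_real (\<alpha>' $ i)) x y z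
                        + cube (\<chi> i. complex_of_real (\<beta>' $ i)) x y z
                        + cube (\<chi> i. complex_of_real (\<gamma>' $ i)) x y z)
          \<and> \<alpha>' \<bullet> \<beta>' = 0 \<and> \<beta>' \<bullet> \<gamma>' = 0 \<and> \<gamma>' \<bullet> \<alpha>' = 0)
       \<and> (\<exists>(T :: real ^ 3 ^ 3) (a::real) b c. orthogonal_matrix T \<and>
            tmul (map_matrix complex_of_real T) f =
              (\<lambda>x y z. of_real a * cube (e 1) x y z + of_real b * cube (e 2) x y z
                        + of_real c * cube (e 3) x y z))"
proof -
  obtain a b c :: "real ^ 3" where f:
      "f = (\<lambda>x y z. cube (of_real_vec a) x y z + cube (of_real_vec b) x y z + cube (of_real_vec c) x y z)"
    and orth: "a \<bullet> b = 0" "b \<bullet> c = 0" "c \<bullet> a = 0"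
    using real_orthogonal_cube_decomposition[OF assms(2-)] .
  moreover obtain T s\<^sub>1 s\<^sub>2 s\<^sub>3 where "orthogonal_matrix T"
    "tmul (map_matrix complex_of_real T) f =
       (\<lambda>x y z. of_real s\<^sub>1 * cube (e 1) x y z + of_real s\<^sub>2 * cube (e 2) x y z + of_real s\<^sub>3 * cube (e 3) x y z)"
    using diagonalize_orthogonal_real_cubes[OF orth] unfolding f .
  ultimately show ?thesis
    unfolding of_real_vec_def by blast
qed

end
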